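(* Let $G=\prod_{i=1}^t K_{n_i}$ with all $n_i\ge 2$, and regard $\{0,1\}^t\subseteq V(G)$. Let $M\subseteq\{0,1\}^t$ be a set such that no two distinct vectors in $M$ agree in exactly $t-1$ coordinates, and no two vectors in $M$ differ in all $t$ coordinates. Then $\{0,1\}^t\setminus M$ is a dominating set of $G$.
   Context: $K_m$ is the complete graph on $m$ vertices; vertices of the direct product $\prod_{i=1}^t K_{n_i}$ are tuples $(x_1,\dots,x_t)$ with $x_i\in\{0,\dots,n_i-1\}$, two tuples being adjacent iff they differ in every coordinate. A set $D$ is dominating if every vertex is in $D$ or adjacent to a vertex of $D$. *)

theory Defs
  imports Main
begin

text \<open>Vertices of the direct product of complete graphs K_{n_0} x ... x K_{n_{t-1}}:
  tuples represented as functions nat => nat, extensional (value 0 outside {0..<t}).\<close>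
definition prod_vertices :: "nat \<Rightarrow> (nat \<Rightarrow> nat) \<Rightarrow> (nat \<Rightarrow> nat) set" where
  "prod_vertices t n = {x. (\<forall>i<t. x i < n i) \<and> (\<forall>i\<ge>t. x i = 0)}"

definition prod_adj :: "nat \<Rightarrow> (nat \<Rightarrow> nat) \<Rightarrow> (nat \<Rightarrow> nat) \<Rightarrow> bool" where
  "prod_adj t x y \<longleftrightarrow> (\<forall>i<t. x i \<noteq> y i)"

definition dominating :: "'v set \<Rightarrow> ('v \<Rightarrow> 'v \<Rightarrow> bool) \<Rightarrow> 'v set \<Rightarrow> bool" where
  "dominating V adj D \<longleftrightarrow> D \<subseteq> V \<and> (\<forall>v\<in>V. v \<in> D \<or> (\<exists>d\<in>D. adj v d))"

definition binary_vectors :: "nat \<Rightarrow> (nat \<Rightarrow> nat) set" where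
  "binary_vectors t = {x. (\<forall>i<t. x i \<in> {0, 1}) \<and> (\<forall>i\<ge>t. x i = 0)}"

end

theory Submission
  imports Defs
begin

text \<open>A vertex of \<open>{0,1}\<^sup>t\<close> lying in \<open>M\<close> is adjacent to its binary complement, which
  cannot also lie in \<open>M\<close>. A vertex outside \<open>{0,1}\<^sup>t\<close> has some coordinate \<open>k\<close> with value
  at least 2; flipping every other coordinate to a binary value different from it and putting
  either 0 or 1 at \<open>k\<close> gives two binary neighbours agreeing in exactly \<open>t - 1\<close> coordinates, so
  at most one of them lies in \<open>M\<close>.\<close>

lemma binary_vectors_subset_prod_vertices:
  assumes "\<forall>i<t. n i \<ge> 2"
  shows "binary_vectors t \<subseteq> prod_vertices t n"
  using assms unfolding binary_vectors_def prod_vertices_def by force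

definition binary_complement :: "nat \<Rightarrow> (nat \<Rightarrow> nat) \<Rightarrow> nat \<Rightarrow> nat" where
  "binary_complement t v = (\<lambda>i. if i < t then 1 - v i else 0)"

lemma binary_complement_in_binary_vectors: "binary_complement t v \<in> binary_vectors t"
  unfolding binary_complement_def binary_vectors_def by auto

lemma prod_adj_binary_complement:
  assumes "v \<in> binary_vectors t"
  shows "prod_adj t v (binary_complement t v)"
  using assms unfolding binary_complement_def binary_vectors_def prod_adj_def by force

definition binary_neighbour :: "nat \<Rightarrow> (nat \<Rightarrow> nat) \<Rightarrow> nat \<Rightarrow> nat \<Rightarrow> nat \<Rightarrow> nat" where
  "binary_neighbour t v k b =
     (\<lambda>i. if i < t then (if i = k then b else if v i = 0 then 1 else 0) else 0)"

lemma binary_neighbour_in_binary_vectors: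
  "b \<in> {0, 1} \<Longrightarrow> binary_neighbour t v k b \<in> binary_vectors t"
  unfolding binary_neighbour_def binary_vectors_def by auto

lemma prod_adj_binary_neighbour:
  assumes "k < t" "v k \<notin> {0, 1}" "b \<in> {0, 1}"
  shows "prod_adj t v (binary_neighbour t v k b)"
  using assms unfolding binary_neighbour_def prod_adj_def by auto

lemma binary_neighbours_agree_off:
  "{i. i < t \<and> binary_neighbour t v k 0 i = binary_neighbour t v k 1 i} = {0..<t} - {k}"
  unfolding binary_neighbour_def by auto

lemma binary_neighbours_distinct:
  assumes "k < t"
  shows "binary_neighbour t v k 0 \<noteq> binary_neighbour t v k 1"
proof
  assume "binary_neighbour t v k 0 = binary_neighbour t v k 1"
  then have "binary_neighbour t v k 0 k = binary_neighbour t v k 1 k" by simp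
  with assms show False unfolding binary_neighbour_def by simp
qed

lemma non_binary_vertex_has_twin_binary_neighbours:
  assumes "v \<in> prod_vertices t n" "v \<notin> binary_vectors t"
  obtains x y where "x \<in> binary_vectors t" "y \<in> binary_vectors t" "x \<noteq> y"
    "card {i. i < t \<and> x i = y i} = t - 1" "prod_adj t v x" "prod_adj t v y"
proof -
  obtain k where k: "k < t" "v k \<notin> {0, 1}"
    using assms unfolding binary_vectors_def prod_vertices_def by auto
  show ?thesis
  proof (rule that)
    show "binary_neighbour t v k 0 \<in> binary_vectors t" "binary_neighbour t v k 1 \<in> binary_vectors t"
      by (simp_all add: binary_neighbour_in_binary_vectors)
    show "prod_adj t v (binary_neighbour t v k 0)" "prod_adj t v (binary_neighbour t v k 1)"
      using k by (simp_all add: prod_adj_binary_neighbour)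
    show "binary_neighbour t v k 0 \<noteq> binary_neighbour t v k 1"
      using k(1) by (rule binary_neighbours_distinct)
    show "card {i. i < t \<and> binary_neighbour t v k 0 i = binary_neighbour t v k 1 i} = t - 1"
      unfolding binary_neighbours_agree_off using k(1) by simp
  qed
qed

theorem theorem4p4:
  fixes t :: nat and n :: "nat \<Rightarrow> nat" and M :: "(nat \<Rightarrow> nat) set"
  assumes "\<forall>i<t. n i \<ge> 2"
    and "M \<subseteq> binary_vectors t"
    and "\<forall>x\<in>M. \<forall>y\<in>M. x \<noteq> y \<longrightarrow> card {i. i < t \<and> x i = y i} \<noteq> t - 1"
    and "\<forall>x\<in>M. \<forall>y\<in>M. \<not> (\<forall>i<t. x i \<noteq> y i)"
  shows "dominating (prod_vertices t n) (prod_adj t) (binary_vectors t - M)"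
  unfolding dominating_def
proof (intro conjI ballI)
  show "binary_vectors t - M \<subseteq> prod_vertices t n"
    using binary_vectors_subset_prod_vertices[OF assms(1)] by blast
next
  fix v assume v: "v \<in> prod_vertices t n"
  show "v \<in> binary_vectors t - M \<or> (\<exists>d\<in>binary_vectors t - M. prod_adj t v d)"
  proof (cases "v \<in> binary_vectors t")
    case True
    then have "prod_adj t v (binary_complement t v)"
      by (rule prod_adj_binary_complement)
    then have "v \<in> M \<Longrightarrow> binary_complement t v \<notin> M"
      using assms(4) unfolding prod_adj_def by blast
    then show ?thesis
      using True binary_complement_in_binary_vectors \<open>prod_adj t v _\<close> by blast
  next
    case False
    obtain x y where "x \<in> binary_vectors t" "y \<in> binary_vectors t" "x \<noteq> y"
      "card {i. i < t \<and> x i = y i} = t - 1" "prod_adj t v x" "prod_adj t v y"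
      by (rule non_binary_vertex_has_twin_binary_neighbours[OF v False])
    then show ?thesis using assms(3) by blast
  qed
qed

end
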